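(* Let $m\ge 2$ and let $\Gamma$ be a strongly regular graph with smallest adjacency eigenvalue $-m$ which is not sporadic, i.e. $\Gamma$ is one of: (i) a complete multipartite graph $K_{a\times m}$ with $a\ge 2$ parts of size $m$; (ii) a Latin square graph $LS_m(n)$; (iii) the block graph of a Steiner system $S(2,m,mn+m-n)$. Then $E(\Gamma)=E(\bar\Gamma)$ if and only if $\Gamma\cong K_{m\times m}$ (imprimitive case) or $\Gamma$ is a Latin square graph $LS_m(n)$ for some $n\ge 2$ (primitive case).
   Context: A strongly regular graph with parameters $(n,k,e,d)$ is a $k$-regular simple graph on $n$ vertices, neither complete nor edgeless, in which adjacent vertices have $e$ common neighbours and distinct non-adjacent vertices have $d$ common neighbours. The Latin square graph $LS_m(n)$ is the graph of an orthogonal array $OA(n,m)$ (an $m\times n^2$ array over an $n$-set in which every pair of rows contains each ordered pair of symbols exactly once): vertices are the $n^2$ columns, two being adjacent iff they agree in exactly one row; it is strongly regular with parameters $(n^2, m(n-1), (m-1)(m-2)+n-2, m(m-1))$. The block graph of a Steiner system $S(2,m,v)$ has the blocks as vertices, two blocks adjacent iff they intersect. The energy $E(\Gamma)$ is the sum of the absolute values of the adjacency eigenvalues (with multiplicity); $\bar\Gamma$ is the complement. *)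

theory Defs
  imports "Jordan_Normal_Form.Char_Poly"
begin

definition simple_graph_on :: "'b set \<Rightarrow> ('b \<Rightarrow> 'b \<Rightarrow> bool) \<Rightarrow> bool" where
  "simple_graph_on V E \<longleftrightarrow> finite V \<and>
     (\<forall>x y. E x y \<longrightarrow> x \<in> V \<and> y \<in> V) \<and>
     (\<forall>x y. E x y \<longrightarrow> E y x) \<and> (\<forall>x. \<not> E x x)"

definition complement_graph :: "'b set \<Rightarrow> ('b \<Rightarrow> 'b \<Rightarrow> bool) \<Rightarrow> 'b \<Rightarrow> 'b \<Rightarrow> bool" where
  "complement_graph V E x y \<longleftrightarrow> x \<in> V \<and> y \<in> V \<and> x \<noteq> y \<and> \<not> E x y"

definition strongly_regular ::
  "'b set \<Rightarrow> ('b \<Rightarrow> 'b \<Rightarrow> bool) \<Rightarrow> nat \<Rightarrow> nat \<Rightarrow> nat \<Rightarrow> nat \<Rightarrow> bool" where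
  "strongly_regular V E n k e d \<longleftrightarrow> simple_graph_on V E \<and> card V = n \<and>
     (\<exists>x\<in>V. \<exists>y\<in>V. x \<noteq> y \<and> \<not> E x y) \<and>  \<comment> \<open>not complete\<close>
     (\<exists>x y. E x y) \<and>                         \<comment> \<open>not edgeless\<close>
     (\<forall>x\<in>V. card {z\<in>V. E x z} = k) \<and>
     (\<forall>x\<in>V. \<forall>y\<in>V. E x y \<longrightarrow> card {z\<in>V. E x z \<and> E y z} = e) \<and>
     (\<forall>x\<in>V. \<forall>y\<in>V. x \<noteq> y \<longrightarrow> \<not> E x y \<longrightarrow> card {z\<in>V. E x z \<and> E y z} = d)"

definition is_srg :: "'b set \<Rightarrow> ('b \<Rightarrow> 'b \<Rightarrow> bool) \<Rightarrow> bool" where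
  "is_srg V E \<longleftrightarrow> (\<exists>n k e d. strongly_regular V E n k e d)"

definition graph_iso ::
  "'b set \<Rightarrow> ('b \<Rightarrow> 'b \<Rightarrow> bool) \<Rightarrow> 'c set \<Rightarrow> ('c \<Rightarrow> 'c \<Rightarrow> bool) \<Rightarrow> bool" where
  "graph_iso V E W F \<longleftrightarrow> (\<exists>f. bij_betw f V W \<and>
     (\<forall>x\<in>V. \<forall>y\<in>V. E x y \<longleftrightarrow> F (f x) (f y)))"

definition adj_matrix :: "nat \<Rightarrow> (nat \<Rightarrow> nat \<Rightarrow> bool) \<Rightarrow> real mat" where
  "adj_matrix N E = mat N N (\<lambda>(i, j). if E i j then 1 else 0)"

text \<open>The adjacency matrix is real symmetric, so its characteristic polynomial
  splits over the reals; multiplicities are root orders.\<close>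

definition adj_eigenvalues :: "nat \<Rightarrow> (nat \<Rightarrow> nat \<Rightarrow> bool) \<Rightarrow> real set" where
  "adj_eigenvalues N E = {x. poly (char_poly (adj_matrix N E)) x = 0}"

definition smallest_eigenvalue :: "nat \<Rightarrow> (nat \<Rightarrow> nat \<Rightarrow> bool) \<Rightarrow> real" where
  "smallest_eigenvalue N E = Min (adj_eigenvalues N E)"

definition energy :: "nat \<Rightarrow> (nat \<Rightarrow> nat \<Rightarrow> bool) \<Rightarrow> real" where
  "energy N E = (\<Sum>x\<in>adj_eigenvalues N E.
      real (order x (char_poly (adj_matrix N E))) * \<bar>x\<bar>)"

definition multipartite_V :: "nat \<Rightarrow> nat \<Rightarrow> (nat \<times> nat) set" where
  "multipartite_V a m = {0..<a} \<times> {0..<m}"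

definition multipartite_E :: "nat \<Rightarrow> nat \<Rightarrow> nat \<times> nat \<Rightarrow> nat \<times> nat \<Rightarrow> bool" where
  "multipartite_E a m u v \<longleftrightarrow> u \<in> multipartite_V a m \<and> v \<in> multipartite_V a m \<and> fst u \<noteq> fst v"

definition orthogonal_array :: "nat \<Rightarrow> nat \<Rightarrow> (nat \<Rightarrow> nat \<Rightarrow> nat) \<Rightarrow> bool" where
  "orthogonal_array n m A \<longleftrightarrow>
     (\<forall>i<m. \<forall>c<n^2. A i c < n) \<and>
     (\<forall>i<m. \<forall>j<m. i \<noteq> j \<longrightarrow> (\<forall>s<n. \<forall>t<n.
        card {c. c < n^2 \<and> A i c = s \<and> A j c = t} = 1))"

definition LS_V :: "nat \<Rightarrow> nat set" where
  "LS_V n = {0..<n^2}"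

definition LS_E :: "nat \<Rightarrow> nat \<Rightarrow> (nat \<Rightarrow> nat \<Rightarrow> nat) \<Rightarrow> nat \<Rightarrow> nat \<Rightarrow> bool" where
  "LS_E n m A c c' \<longleftrightarrow> c \<in> LS_V n \<and> c' \<in> LS_V n \<and> c \<noteq> c' \<and>
     card {i. i < m \<and> A i c = A i c'} = 1"

definition steiner_2 :: "nat \<Rightarrow> nat \<Rightarrow> nat set set \<Rightarrow> bool" where
  "steiner_2 m v B \<longleftrightarrow>
     (\<forall>b\<in>B. b \<subseteq> {0..<v} \<and> card b = m) \<and>
     (\<forall>x<v. \<forall>y<v. x \<noteq> y \<longrightarrow> card {b\<in>B. x \<in> b \<and> y \<in> b} = 1)"

definition block_graph_E :: "nat set set \<Rightarrow> nat set \<Rightarrow> nat set \<Rightarrow> bool" where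
  "block_graph_E B b b' \<longleftrightarrow> b \<in> B \<and> b' \<in> B \<and> b \<noteq> b' \<and> b \<inter> b' \<noteq> {}"

end

theory Submission
  imports Defs "Jordan_Normal_Form.Schur_Decomposition"
begin

text \<open>The adjacency matrix A of a strongly regular graph satisfies
  A^2 = (k - d) I + (e - d) A + d J, so its eigenvalues are k, r and -m, where the
  smallest eigenvalue -m and r are the roots of x^2 - (e - d) x - (k - d); the
  complement has eigenvalues N - k - 1, m - 1 and -1 - r. On three such values |x|
  agrees with a quadratic polynomial, so the energy is determined by the traces of
  A and A^2, which are 0 and N k. Comparing the closed forms shows that a graph and
  its complement have the same energy iff k (1 + r) = (N - k - 1) m. Combined with
  the feasibility condition k (k - e - 1) = (N - k - 1) d this forces a = m for
  K_{a x m}, holds for every LS_m(n) (where r = n - m), and fails for the block graph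
  of S(2, m, m n + m - n), where it would give N = (n + 1)^2.\<close>

section \<open>Real matrices satisfying a quadratic relation\<close>

definition trace_mat :: "'a::comm_ring_1 mat \<Rightarrow> 'a" where
  "trace_mat A = (\<Sum>i<dim_row A. A $$ (i,i))"

lemma trace_mat_mult_comm:
  assumes "X \<in> carrier_mat n m" and "Y \<in> carrier_mat m n"
  shows "trace_mat (X * Y) = trace_mat (Y * X)"
proof -
  have "trace_mat (X * Y) = (\<Sum>i<n. \<Sum>l<m. X $$ (i,l) * Y $$ (l,i))"
    using assms unfolding trace_mat_def by (auto simp: scalar_prod_def atLeast0LessThan)
  also have "\<dots> = (\<Sum>l<m. \<Sum>i<n. Y $$ (l,i) * X $$ (i,l))"
    by (subst sum.swap) (simp add: mult.commute)
  also have "\<dots> = trace_mat (Y * X)"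
    using assms unfolding trace_mat_def by (auto simp: scalar_prod_def atLeast0LessThan)
  finally show ?thesis .
qed

lemma trace_mat_similar:
  assumes A: "A \<in> carrier_mat n n" and sim: "similar_mat_wit A B P Q"
  shows "trace_mat A = trace_mat B" and "trace_mat (A * A) = trace_mat (B * B)"
proof -
  from similar_mat_witD2[OF A sim] have B: "B \<in> carrier_mat n n"
    and P: "P \<in> carrier_mat n n" and Q: "Q \<in> carrier_mat n n"
    and QP: "Q * P = 1\<^sub>m n" and A_eq: "A = P * B * Q" by auto
  have conj: "trace_mat (P * X * Q) = trace_mat X" if X: "X \<in> carrier_mat n n" for X
  proof -
    have "trace_mat (P * X * Q) = trace_mat (Q * (P * X))"
      using P Q X by (intro trace_mat_mult_comm) auto
    also have "Q * (P * X) = X"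
      using P Q X QP by (metis assoc_mult_mat left_mult_one_mat)
    finally show ?thesis .
  qed
  show "trace_mat A = trace_mat B"
    using conj[OF B] A_eq by simp
  have "A * A = P * (B * B) * Q"
    using similar_mat_wit_pow_id[OF sim, of 2] A B by (simp add: numeral_2_eq_2)
  then show "trace_mat (A * A) = trace_mat (B * B)"
    using conj[of "B * B"] B by simp
qed

lemma trace_mat_upper_triangular:
  assumes T: "T \<in> carrier_mat n n" and ut: "upper_triangular T"
  shows "trace_mat T = sum_list (diag_mat T)"
    and "trace_mat (T * T) = sum_list (map (\<lambda>x. x^2) (diag_mat T))"
proof -
  show "trace_mat T = sum_list (diag_mat T)"
    using T unfolding trace_mat_def diag_mat_def by (simp add: sum_list_sum_nth atLeast0LessThan)
  have "(T * T) $$ (i,i) = T $$ (i,i) ^ 2" if i: "i < n" for i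
  proof -
    have "(T * T) $$ (i,i) = (\<Sum>l\<in>{0..<n}. T $$ (i,l) * T $$ (l,i))"
      using T i by (simp add: scalar_prod_def)
    also have "\<dots> = (\<Sum>l\<in>{i}. T $$ (i,l) * T $$ (l,i))"
      using ut T i unfolding upper_triangular_def
      by (intro sum.mono_neutral_right) (auto, metis linorder_neqE_nat mult_not_zero)
    finally show ?thesis by (simp add: power2_eq_square)
  qed
  then show "trace_mat (T * T) = sum_list (map (\<lambda>x. x^2) (diag_mat T))"
    using T unfolding trace_mat_def diag_mat_def by (simp add: sum_list_sum_nth atLeast0LessThan)
qed

lemma char_poly_roots_trace:
  fixes A :: "'a::conjugatable_ordered_field mat"
  assumes A: "A \<in> carrier_mat n n" and cp: "char_poly A = (\<Prod>a\<leftarrow>as. [:-a, 1:])"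
  shows "sum_list as = trace_mat A"
    and "sum_list (map (\<lambda>a. a^2) as) = trace_mat (A * A)"
proof -
  obtain T P Q where "schur_decomposition A as = (T, P, Q)"
    by (cases "schur_decomposition A as") auto
  from schur_decomposition[OF A cp this] have sim: "similar_mat_wit A T P Q"
    and ut: "upper_triangular T" and diag: "diag_mat T = as" by auto
  have T: "T \<in> carrier_mat n n" using similar_mat_witD2[OF A sim] by auto
  show "sum_list as = trace_mat A"
    using trace_mat_similar(1)[OF A sim] trace_mat_upper_triangular(1)[OF T ut] diag by simp
  show "sum_list (map (\<lambda>a. a^2) as) = trace_mat (A * A)"
    using trace_mat_similar(2)[OF A sim] trace_mat_upper_triangular(2)[OF T ut] diag by simp
qed

lemma char_poly_of_real_factors:
  fixes M :: "real mat"
  assumes M: "M \<in> carrier_mat n n"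
    and cp: "char_poly (map_mat complex_of_real M) = (\<Prod>a\<leftarrow>map complex_of_real as. [:-a, 1:])"
  shows "char_poly M = (\<Prod>a\<leftarrow>as. [:-a, 1:])"
proof -
  interpret of_real_poly: map_poly_inj_comm_ring_hom complex_of_real ..
  have "map_poly complex_of_real (char_poly M) = char_poly (map_mat complex_of_real M)"
    by (rule of_real_hom.char_poly_hom[OF M, symmetric])
  also have "\<dots> = map_poly complex_of_real (\<Prod>a\<leftarrow>as. [:-a, 1:])"
    unfolding cp of_real_poly.hom_prod_list by (simp add: o_def)
  finally show ?thesis by simp
qed

lemma char_poly_real_splits:
  fixes M :: "real mat"
  assumes M: "M \<in> carrier_mat n n"
    and real_ev: "\<And>a. eigenvalue (map_mat complex_of_real M) a \<Longrightarrow> a \<in> \<real>"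
  obtains as where "char_poly M = (\<Prod>a\<leftarrow>as. [:-a, 1:])" and "length as = n"
proof -
  let ?C = "map_mat complex_of_real M"
  have C: "?C \<in> carrier_mat n n" using M by simp
  obtain cs where cp: "char_poly ?C = (\<Prod>a\<leftarrow>cs. [:-a, 1:])" and len: "length cs = n"
    using char_poly_factorized[OF C] by blast
  have "c \<in> \<real>" if "c \<in> set cs" for c
  proof (rule real_ev)
    have "poly (char_poly ?C) c = 0"
      unfolding cp using that by (simp add: poly_prod_list prod_list_zero_iff)
    then show "eigenvalue ?C c" using eigenvalue_root_char_poly[OF C] by simp
  qed
  then have "cs = map complex_of_real (map Re cs)"
    by (intro nth_equalityI) (auto simp: complex_is_Real_iff)
  then have "char_poly M = (\<Prod>a\<leftarrow>map Re cs. [:-a, 1:])"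
    using cp by (intro char_poly_of_real_factors[OF M]) simp
  with len show thesis using that[of "map Re cs"] by simp
qed

lemma eigenvalue_quadratic_relation:
  fixes C :: "'a::field mat"
  assumes C: "C \<in> carrier_mat n n"
    and sq: "\<And>i j. i < n \<Longrightarrow> j < n \<Longrightarrow>
      (C * C) $$ (i,j) = (if i = j then \<alpha> else 0) + \<beta> * C $$ (i,j) + \<gamma>"
    and cols: "\<And>j. j < n \<Longrightarrow> (\<Sum>i<n. C $$ (i,j)) = \<kappa>"
    and ev: "eigenvalue C a"
  shows "a = \<kappa> \<or> a^2 - \<beta> * a - \<alpha> = 0"
proof -
  from ev obtain v where v: "v \<in> carrier_vec n" and v0: "v \<noteq> 0\<^sub>v n" and Cv: "C *\<^sub>v v = a \<cdot>\<^sub>v v"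
    unfolding eigenvalue_def eigenvector_def using C by auto
  define \<sigma> where "\<sigma> = (\<Sum>j<n. v $ j)"
  have Cv_row: "(\<Sum>j<n. C $$ (i,j) * v $ j) = a * v $ i" if i: "i < n" for i
  proof -
    have "(C *\<^sub>v v) $ i = (\<Sum>j<n. C $$ (i,j) * v $ j)"
      using C v i by (auto simp: scalar_prod_def atLeast0LessThan)
    then show ?thesis using Cv i v by auto
  qed
  have CCv: "(C * C) *\<^sub>v v = (a^2) \<cdot>\<^sub>v v"
    using C v Cv by (simp add: mult_mat_vec power2_eq_square smult_smult_assoc)
  have row_eq: "a^2 * v $ i = \<alpha> * v $ i + \<beta> * (a * v $ i) + \<gamma> * \<sigma>" if i: "i < n" for i
  proof -
    have "a^2 * v $ i = ((C * C) *\<^sub>v v) $ i" using CCv i v by auto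
    also have "\<dots> = (\<Sum>j<n. (C * C) $$ (i,j) * v $ j)"
      using C v i by (auto simp del: assoc_mult_mat_vec simp: scalar_prod_def atLeast0LessThan)
    also have "\<dots> = (\<Sum>j<n. (if i = j then \<alpha> * v $ j else 0) + \<beta> * (C $$ (i,j) * v $ j) + \<gamma> * v $ j)"
      by (rule sum.cong) (auto simp: sq i algebra_simps)
    also have "\<dots> = \<alpha> * v $ i + \<beta> * (\<Sum>j<n. C $$ (i,j) * v $ j) + \<gamma> * \<sigma>"
      using i by (simp add: sum.distrib sum_distrib_left \<sigma>_def)
    finally show ?thesis using Cv_row[OF i] by simp
  qed
  have "a * \<sigma> = (\<Sum>i<n. \<Sum>j<n. C $$ (i,j) * v $ j)"
    using Cv_row by (simp add: \<sigma>_def sum_distrib_left)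
  also have "\<dots> = (\<Sum>j<n. (\<Sum>i<n. C $$ (i,j)) * v $ j)"
    by (subst sum.swap) (simp add: sum_distrib_right)
  also have "\<dots> = \<kappa> * \<sigma>" using cols by (simp add: \<sigma>_def sum_distrib_left)
  finally have col_eq: "(a - \<kappa>) * \<sigma> = 0" by (simp add: algebra_simps)
  obtain i where i: "i < n" and vi: "v $ i \<noteq> 0"
    using v0 v by (metis carrier_vecD eq_vecI index_zero_vec(1) index_zero_vec(2))
  show ?thesis
  proof (cases "a = \<kappa>")
    case False
    with col_eq have "\<sigma> = 0" by simp
    with row_eq[OF i] have "(a^2 - \<beta> * a - \<alpha>) * v $ i = 0" by (simp add: algebra_simps)
    with vi show ?thesis by simp
  qed simp
qed

lemma complex_quadratic_root_real:
  fixes a :: complex and \<alpha> \<beta> :: real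
  assumes disc: "\<beta>^2 + 4 * \<alpha> \<ge> 0" and root: "a^2 - of_real \<beta> * a - of_real \<alpha> = 0"
  shows "a \<in> \<real>"
proof -
  define D where "D = sqrt (\<beta>^2 + 4 * \<alpha>)"
  define r1 where "r1 = (\<beta> + D) / 2"
  define r2 where "r2 = (\<beta> - D) / 2"
  have "D^2 = \<beta>^2 + 4 * \<alpha>" using disc by (simp add: D_def)
  then have sum: "r1 + r2 = \<beta>" and prod: "r1 * r2 = - \<alpha>"
    by (simp_all add: r1_def r2_def field_simps power2_eq_square)
  have "(a - of_real r1) * (a - of_real r2) = a^2 - of_real (r1 + r2) * a + of_real (r1 * r2)"
    by (simp add: algebra_simps power2_eq_square)
  also have "\<dots> = 0" using root unfolding sum prod by simp
  finally show ?thesis by auto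
qed

text \<open>Hypothesis sq is the entrywise form of M^2 = \<alpha> I + \<beta> M + \<gamma> J, where J is the
  all-ones matrix.\<close>

lemma quadratic_relation_spectrum:
  fixes M :: "real mat"
  assumes M: "M \<in> carrier_mat n n"
    and sq: "\<And>i j. i < n \<Longrightarrow> j < n \<Longrightarrow>
      (M * M) $$ (i,j) = (if i = j then \<alpha> else 0) + \<beta> * M $$ (i,j) + \<gamma>"
    and cols: "\<And>j. j < n \<Longrightarrow> (\<Sum>i<n. M $$ (i,j)) = \<kappa>"
    and disc: "\<beta>^2 + 4 * \<alpha> \<ge> 0"
  obtains as where "char_poly M = (\<Prod>a\<leftarrow>as. [:-a, 1:])" and "length as = n"
    and "\<forall>a\<in>set as. a = \<kappa> \<or> a^2 - \<beta> * a - \<alpha> = 0"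
    and "sum_list as = trace_mat M" and "sum_list (map (\<lambda>a. a^2) as) = trace_mat (M * M)"
proof -
  let ?C = "map_mat complex_of_real M"
  have C: "?C \<in> carrier_mat n n" using M by simp
  have "a \<in> \<real>" if ev: "eigenvalue ?C a" for a
  proof -
    have CC: "?C * ?C = map_mat complex_of_real (M * M)"
      by (rule of_real_hom.mat_hom_mult[OF M M, symmetric])
    have "a = of_real \<kappa> \<or> a^2 - of_real \<beta> * a - of_real \<alpha> = 0"
    proof (rule eigenvalue_quadratic_relation[OF C _ _ ev])
      show "(?C * ?C) $$ (i,j) = (if i = j then of_real \<alpha> else 0) + of_real \<beta> * ?C $$ (i,j) + of_real \<gamma>"
        if "i < n" "j < n" for i j
        using M that sq[OF that] unfolding CC by (subst index_map_mat) (auto simp del: index_mult_mat(1))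
      show "(\<Sum>i<n. ?C $$ (i,j)) = of_real \<kappa>" if "j < n" for j
        using M that cols[OF that] by (simp flip: of_real_sum)
    qed
    then show ?thesis using complex_quadratic_root_real[OF disc] by auto
  qed
  then obtain as where cp: "char_poly M = (\<Prod>a\<leftarrow>as. [:-a, 1:])" and len: "length as = n"
    using char_poly_real_splits[OF M] by blast
  have "a = \<kappa> \<or> a^2 - \<beta> * a - \<alpha> = 0" if "a \<in> set as" for a
  proof (rule eigenvalue_quadratic_relation[OF M sq cols])
    have "poly (char_poly M) a = 0"
      unfolding cp using that by (simp add: poly_prod_list prod_list_zero_iff)
    then show "eigenvalue M a" using eigenvalue_root_char_poly[OF M] by simp
  qed
  then show thesis
    using that cp len char_poly_roots_trace[OF M cp] by blast
qed

lemma sum_off_diagonal: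
  fixes f :: "nat \<Rightarrow> real"
  assumes "i < N"
  shows "(\<Sum>l<N. (if i = l then 0 else 1) * f l) = (\<Sum>l<N. f l) - f i"
proof -
  have "(\<Sum>l<N. (if i = l then 0 else 1) * f l) = (\<Sum>l<N. f l - (if i = l then f l else 0))"
    by (rule sum.cong) auto
  also have "\<dots> = (\<Sum>l<N. f l) - f i" using assms by (simp add: sum_subtractf)
  finally show ?thesis .
qed

lemma complement_quadratic_relation:
  fixes M B :: "real mat"
  assumes M: "M \<in> carrier_mat n n" and B: "B \<in> carrier_mat n n"
    and B_eq: "\<And>i j. i < n \<Longrightarrow> j < n \<Longrightarrow> B $$ (i,j) = (if i = j then 0 else 1) - M $$ (i,j)"
    and sq: "\<And>i j. i < n \<Longrightarrow> j < n \<Longrightarrow>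
      (M * M) $$ (i,j) = (if i = j then \<alpha> else 0) + \<beta> * M $$ (i,j) + \<gamma>"
    and rows: "\<And>i. i < n \<Longrightarrow> (\<Sum>j<n. M $$ (i,j)) = \<kappa>"
    and cols: "\<And>j. j < n \<Longrightarrow> (\<Sum>i<n. M $$ (i,j)) = \<kappa>"
    and diag: "\<And>i. i < n \<Longrightarrow> M $$ (i,i) = 0"
    and i: "i < n" and j: "j < n"
  shows "(B * B) $$ (i,j) = (if i = j then \<alpha> - \<beta> - 1 else 0) - (2 + \<beta>) * B $$ (i,j)
      + (n - 2 * \<kappa> + \<gamma> + \<beta>)"
proof -
  let ?d = "\<lambda>i l. (if i = l then 0 else 1) :: real"
  have "(B * B) $$ (i,j) = (\<Sum>l<n. B $$ (i,l) * B $$ (l,j))"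
    using B i j by (simp add: scalar_prod_def atLeast0LessThan)
  also have "\<dots> = (\<Sum>l<n. ?d i l * ?d l j - ?d i l * M $$ (l,j) - ?d l j * M $$ (i,l)
      + M $$ (i,l) * M $$ (l,j))"
    by (rule sum.cong) (auto simp: B_eq i j algebra_simps)
  also have "\<dots> = (\<Sum>l<n. ?d i l * ?d l j) - (\<Sum>l<n. ?d i l * M $$ (l,j))
      - (\<Sum>l<n. ?d j l * M $$ (i,l)) + (\<Sum>l<n. M $$ (i,l) * M $$ (l,j))"
    by (simp add: sum.distrib sum_subtractf eq_commute[of j])
  also have "(\<Sum>l<n. ?d i l * M $$ (l,j)) = \<kappa> - M $$ (i,j)"
    using sum_off_diagonal[OF i, of "\<lambda>l. M $$ (l,j)"] cols[OF j] by simp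
  also have "(\<Sum>l<n. ?d j l * M $$ (i,l)) = \<kappa> - M $$ (i,j)"
    using sum_off_diagonal[OF j, of "\<lambda>l. M $$ (i,l)"] rows[OF i] by simp
  also have "(\<Sum>l<n. M $$ (i,l) * M $$ (l,j)) = (M * M) $$ (i,j)"
    using M i j by (simp add: scalar_prod_def atLeast0LessThan)
  also have "(\<Sum>l<n. ?d i l * ?d l j) = real n - 1 - ?d i j"
    using sum_off_diagonal[OF i, of "\<lambda>l. ?d l j"] sum_off_diagonal[OF j, of "\<lambda>l. 1"] j
    by (simp add: eq_commute[of _ j])
  finally have BB: "(B * B) $$ (i,j)
      = real n - 1 - ?d i j - 2 * (\<kappa> - M $$ (i,j)) + (M * M) $$ (i,j)" by simp
  show ?thesis
  proof (cases "i = j")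
    case True
    then show ?thesis using BB sq[OF i j] B_eq[OF i j] diag[OF i] by (simp add: algebra_simps)
  next
    case False
    then have M_eq: "M $$ (i,j) = 1 - B $$ (i,j)" using B_eq[OF i j] by simp
    show ?thesis using BB sq[OF i j] False unfolding M_eq by (simp add: algebra_simps)
  qed
qed

section \<open>Energy of graphs with a quadratic adjacency relation\<close>

lemma order_prod_list_linear:
  fixes as :: "'a::idom list"
  shows "Polynomial.order x (\<Prod>a\<leftarrow>as. [:-a, 1:]) = count_list as x"
proof (induction as)
  case Nil
  then show ?case by (simp add: order_0I)
next
  case (Cons a as)
  have "(\<Prod>a\<leftarrow>as. [:-a, 1:]) \<noteq> 0"
    by (auto simp: prod_list_zero_iff)
  then have "[:-a, 1:] * (\<Prod>a\<leftarrow>as. [:-a, 1:]) \<noteq> 0"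
    by (intro no_zero_divisors) auto
  then have "Polynomial.order x ([:-a, 1:] * (\<Prod>a\<leftarrow>as. [:-a, 1:]))
      = Polynomial.order x [:-a, 1:] + Polynomial.order x (\<Prod>a\<leftarrow>as. [:-a, 1:])"
    by (rule order_mult)
  then show ?case using Cons by (simp add: order_linear')
qed

lemma poly_prod_list_linear_eq_0_iff:
  fixes as :: "'a::idom list"
  shows "poly (\<Prod>a\<leftarrow>as. [:-a, 1:]) x = 0 \<longleftrightarrow> x \<in> set as"
  by (induction as) auto

lemma sum_list_map_eq_sum_count_list:
  fixes f :: "'a \<Rightarrow> 'b::comm_semiring_1"
  assumes "finite X" and "set xs \<subseteq> X"
  shows "sum_list (map f xs) = (\<Sum>x\<in>X. of_nat (count_list xs x) * f x)"
  using assms(2)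
proof (induction xs)
  case (Cons a xs)
  then have "(\<Sum>x\<in>X. of_nat (count_list (a # xs) x) * f x)
      = (\<Sum>x\<in>X. of_nat (count_list xs x) * f x + (if a = x then f x else 0))"
    by (intro sum.cong) (auto simp: algebra_simps)
  also have "\<dots> = sum_list (map f xs) + f a"
    using Cons assms(1) by (simp add: sum.distrib)
  finally show ?case by (simp add: add.commute)
qed simp

lemma energy_eq_sum_list_abs:
  assumes "char_poly (adj_matrix N E) = (\<Prod>a\<leftarrow>as. [:-a, 1:])"
  shows "adj_eigenvalues N E = set as" and "energy N E = sum_list (map abs as)"
proof -
  show "adj_eigenvalues N E = set as"
    unfolding adj_eigenvalues_def assms poly_prod_list_linear_eq_0_iff by simp
  then show "energy N E = sum_list (map abs as)"
    unfolding energy_def assms order_prod_list_linear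
    by (intro sum_list_map_eq_sum_count_list[symmetric]) auto
qed

text \<open>On the three values \<kappa>, r, s the function |x| coincides with the quadratic
  x - c (x - \<kappa>) (x - r), so the sum of the absolute values only depends on
  the first two power sums.\<close>

lemma sum_list_abs_three_values:
  fixes as :: "real list" and \<kappa> r s :: real
  assumes vals: "\<forall>a\<in>set as. a = \<kappa> \<or> a = r \<or> a = s"
    and "\<kappa> \<ge> 0" and "r \<ge> 0" and "s < 0"
    and sum1: "sum_list as = 0" and sum2: "sum_list (map (\<lambda>a. a^2) as) = length as * \<kappa>"
  shows "sum_list (map abs as) = - 2 * s * length as * \<kappa> * (1 + r) / ((s - \<kappa>) * (s - r))"
proof -
  define c where "c = 2 * s / ((s - \<kappa>) * (s - r))"
  have denom: "(s - \<kappa>) * (s - r) \<noteq> 0" using assms by auto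
  then have "map abs as = map (\<lambda>a. a - c * ((a - \<kappa>) * (a - r))) as"
    using vals assms unfolding c_def by (intro map_cong) (auto simp: field_simps)
  also have "sum_list \<dots> = sum_list as
      - c * (sum_list (map (\<lambda>a. a^2) as) - (\<kappa> + r) * sum_list as + \<kappa> * r * length as)"
    by (induction as) (simp_all add: algebra_simps power2_eq_square)
  also have "\<dots> = - 2 * s * length as * \<kappa> * (1 + r) / ((s - \<kappa>) * (s - r))"
    unfolding sum1 sum2 c_def using denom by (simp add: field_simps)
  finally show ?thesis .
qed

lemma dim_adj_matrix:
  "dim_row (adj_matrix N E) = N" "dim_col (adj_matrix N E) = N"
  unfolding adj_matrix_def by simp_all

lemma adj_matrix_carrier: "adj_matrix N E \<in> carrier_mat N N"
  unfolding carrier_mat_def by (simp add: dim_adj_matrix)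

lemma adj_matrix_index:
  "i < N \<Longrightarrow> j < N \<Longrightarrow> adj_matrix N E $$ (i,j) = (if E i j then 1 else 0)"
  unfolding adj_matrix_def by simp

lemma complement_adj_matrix_index:
  assumes "i < N" and "j < N" and "\<And>x. \<not> E x x"
  shows "adj_matrix N (complement_graph {0..<N} E) $$ (i,j)
    = (if i = j then 0 else 1) - adj_matrix N E $$ (i,j)"
  using assms by (simp add: adj_matrix_index complement_graph_def)

lemma energy_of_adjacency_relation:
  fixes N :: nat and E :: "nat \<Rightarrow> nat \<Rightarrow> bool" and \<kappa> r s :: real
  defines "A \<equiv> adj_matrix N E"
  assumes irrefl: "\<And>x. \<not> E x x"
    and sq: "\<And>i j. i < N \<Longrightarrow> j < N \<Longrightarrow>
      (A * A) $$ (i,j) = (if i = j then - (r * s) else 0) + (r + s) * A $$ (i,j) + (\<kappa> + r * s)"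
    and cols: "\<And>j. j < N \<Longrightarrow> (\<Sum>i<N. A $$ (i,j)) = \<kappa>"
    and "\<kappa> \<ge> 0" and "r \<ge> 0" and "s < 0"
  shows "energy N E = - 2 * s * N * \<kappa> * (1 + r) / ((s - \<kappa>) * (s - r))"
proof -
  have A: "A \<in> carrier_mat N N" unfolding A_def by (rule adj_matrix_carrier)
  have "(r + s)^2 + 4 * - (r * s) = (r - s)^2" by (simp add: power2_eq_square algebra_simps)
  then have disc: "(r + s)^2 + 4 * - (r * s) \<ge> 0" by simp
  obtain as where cp: "char_poly A = (\<Prod>a\<leftarrow>as. [:-a, 1:])" and len: "length as = N"
    and vals: "\<forall>a\<in>set as. a = \<kappa> \<or> a^2 - (r + s) * a - - (r * s) = 0"
    and tr1: "sum_list as = trace_mat A" and tr2: "sum_list (map (\<lambda>a. a^2) as) = trace_mat (A * A)"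
    using quadratic_relation_spectrum[OF A sq cols disc] by blast
  have diag: "A $$ (i,i) = 0" if "i < N" for i
    using that irrefl by (simp add: A_def adj_matrix_index)
  have "trace_mat A = 0"
    using A diag unfolding trace_mat_def by simp
  moreover have "trace_mat (A * A) = N * \<kappa>"
  proof -
    have diag_sq: "(A * A) $$ (i,i) = \<kappa>" if "i < N" for i
      using sq[OF that that] diag[OF that] by simp
    have "trace_mat (A * A) = (\<Sum>i<N. (A * A) $$ (i,i))"
      using A by (simp add: trace_mat_def)
    also have "\<dots> = (\<Sum>i<N. \<kappa>)"
      by (rule sum.cong[OF refl]) (rule diag_sq, simp)
    finally show ?thesis by simp
  qed
  moreover have "\<forall>a\<in>set as. a = \<kappa> \<or> a = r \<or> a = s"
  proof
    fix a assume "a \<in> set as"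
    moreover have "a^2 - (r + s) * a - - (r * s) = (a - r) * (a - s)"
      by (simp add: power2_eq_square algebra_simps)
    ultimately show "a = \<kappa> \<or> a = r \<or> a = s" using vals by auto
  qed
  ultimately have "sum_list (map abs as) = - 2 * s * N * \<kappa> * (1 + r) / ((s - \<kappa>) * (s - r))"
    using sum_list_abs_three_values[of as \<kappa> r s] assms tr1 tr2 len by simp
  then show ?thesis
    using energy_eq_sum_list_abs(2) cp unfolding A_def by simp
qed

section \<open>Strongly regular graphs\<close>

lemma sum_indicator_eq_card:
  fixes N :: nat
  shows "(\<Sum>l<N. if P l then 1 else 0 :: real) = real (card {z\<in>{0..<N}. P z})"
proof -
  have "(\<Sum>l<N. if P l then 1 else 0 :: real) = (\<Sum>z\<in>{z\<in>{..<N}. P z}. 1)"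
    by (rule sum.inter_filter[symmetric]) simp
  also have "{z\<in>{..<N}. P z} = {z\<in>{0..<N}. P z}" by auto
  finally show ?thesis by simp
qed

lemma adj_matrix_row_sum:
  assumes "i < N"
  shows "(\<Sum>j<N. adj_matrix N E $$ (i,j)) = real (card {z\<in>{0..<N}. E i z})"
  using assms by (simp add: adj_matrix_index sum_indicator_eq_card)

lemma adj_matrix_square_index:
  assumes "i < N" and "j < N"
  shows "(adj_matrix N E * adj_matrix N E) $$ (i,j) = real (card {z\<in>{0..<N}. E i z \<and> E z j})"
proof -
  have "(adj_matrix N E * adj_matrix N E) $$ (i,j) = (\<Sum>l<N. if E i l \<and> E l j then 1 else 0)"
    using assms by (auto simp: adj_matrix_def scalar_prod_def atLeast0LessThan intro!: sum.cong)
  then show ?thesis by (simp add: sum_indicator_eq_card)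
qed

lemma srg_adj_matrix:
  assumes srg: "strongly_regular {0..<N} E n k e d"
  defines "A \<equiv> adj_matrix N E"
  shows "\<And>i j. i < N \<Longrightarrow> j < N \<Longrightarrow>
      (A * A) $$ (i,j) = (if i = j then real k - real d else 0) + (real e - real d) * A $$ (i,j) + real d"
    and "\<And>i. i < N \<Longrightarrow> (\<Sum>j<N. A $$ (i,j)) = real k"
    and "\<And>j. j < N \<Longrightarrow> (\<Sum>i<N. A $$ (i,j)) = real k"
    and "\<And>i. i < N \<Longrightarrow> A $$ (i,i) = 0"
proof -
  have sym: "E x y \<Longrightarrow> E y x" and irr: "\<not> E x x" for x y
    using srg unfolding strongly_regular_def simple_graph_on_def by auto
  have deg: "\<And>x. x < N \<Longrightarrow> card {z\<in>{0..<N}. E x z} = k"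
    and common_adj: "\<And>x y. x < N \<Longrightarrow> y < N \<Longrightarrow> E x y \<Longrightarrow> card {z\<in>{0..<N}. E x z \<and> E y z} = e"
    and common_nonadj: "\<And>x y. x < N \<Longrightarrow> y < N \<Longrightarrow> x \<noteq> y \<Longrightarrow> \<not> E x y \<Longrightarrow>
      card {z\<in>{0..<N}. E x z \<and> E y z} = d"
    using srg unfolding strongly_regular_def by auto
  show "A $$ (i,i) = 0" if "i < N" for i
    using that irr by (simp add: A_def adj_matrix_index)
  show row_sum: "(\<Sum>j<N. A $$ (i,j)) = real k" if "i < N" for i
    using that deg unfolding A_def by (simp add: adj_matrix_row_sum)
  show "(\<Sum>i<N. A $$ (i,j)) = real k" if j: "j < N" for j
  proof -
    have "(\<Sum>i<N. A $$ (i,j)) = (\<Sum>i<N. A $$ (j,i))"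
      using j by (intro sum.cong) (auto simp: A_def adj_matrix_index intro: sym)
    then show ?thesis using row_sum[OF j] by simp
  qed
  show "(A * A) $$ (i,j) = (if i = j then real k - real d else 0) + (real e - real d) * A $$ (i,j) + real d"
    if i: "i < N" and j: "j < N" for i j
  proof -
    have "{z\<in>{0..<N}. E i z \<and> E z j} = {z\<in>{0..<N}. E i z \<and> E j z}"
      using sym by blast
    then have "(A * A) $$ (i,j) = real (card {z\<in>{0..<N}. E i z \<and> E j z})"
      using i j by (simp add: A_def adj_matrix_square_index)
    then show ?thesis
      using i j deg common_adj common_nonadj irr by (auto simp: A_def adj_matrix_index)
  qed
qed

lemma srg_parameter_identity:
  assumes srg: "strongly_regular {0..<N} E n k e d"
  shows "real k * (real k - real e - 1) = (real N - real k - 1) * real d"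
proof -
  let ?A = "adj_matrix N E"
  note rel = srg_adj_matrix[OF srg]
  obtain i where i: "i < N"
    using srg unfolding strongly_regular_def by auto
  have "(\<Sum>j<N. (?A * ?A) $$ (i,j)) = (\<Sum>j<N. \<Sum>l<N. ?A $$ (i,l) * ?A $$ (l,j))"
    using i by (intro sum.cong) (auto simp: dim_adj_matrix scalar_prod_def atLeast0LessThan)
  also have "\<dots> = (\<Sum>l<N. ?A $$ (i,l) * (\<Sum>j<N. ?A $$ (l,j)))"
    by (subst sum.swap) (simp add: sum_distrib_left)
  also have "\<dots> = real k * real k"
    using i by (simp add: rel(2) flip: sum_distrib_right)
  finally have "(\<Sum>j<N. (?A * ?A) $$ (i,j)) = real k * real k" .
  moreover have "(\<Sum>j<N. (?A * ?A) $$ (i,j)) = real k - real d + (real e - real d) * real k + real d * real N"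
    using i by (simp add: rel(1) rel(2) sum.distrib flip: sum_distrib_left)
  ultimately show ?thesis by (simp add: algebra_simps)
qed

lemma strongly_regular_bounds:
  assumes "strongly_regular {0..<N} E n k e d"
  shows "d \<le> k" and "k < N" and "0 < k"
proof -
  have edges: "E x y \<Longrightarrow> x < N \<and> y < N" and irr: "\<not> E x x" for x y
    using assms unfolding strongly_regular_def simple_graph_on_def by auto
  have deg: "\<And>x. x < N \<Longrightarrow> card {z\<in>{0..<N}. E x z} = k"
    and common_nonadj: "\<And>x y. x < N \<Longrightarrow> y < N \<Longrightarrow> x \<noteq> y \<Longrightarrow> \<not> E x y \<Longrightarrow>
      card {z\<in>{0..<N}. E x z \<and> E y z} = d"
    and "\<exists>x\<in>{0..<N}. \<exists>y\<in>{0..<N}. x \<noteq> y \<and> \<not> E x y" and "\<exists>x y. E x y"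
    using assms unfolding strongly_regular_def by auto
  then obtain x y u w where x: "x < N" and y: "y < N" and xy: "x \<noteq> y" "\<not> E x y" and "E u w"
    by auto
  have "d = card {z\<in>{0..<N}. E x z \<and> E y z}"
    using common_nonadj[OF x y xy] by simp
  also have "\<dots> \<le> card {z\<in>{0..<N}. E x z}" by (rule card_mono) auto
  finally show "d \<le> k" using deg[OF x] by simp
  have "{z\<in>{0..<N}. E x z} \<subseteq> {0..<N} - {x}" using irr by auto
  then have "card {z\<in>{0..<N}. E x z} \<le> card ({0..<N} - {x})" by (intro card_mono) auto
  then show "k < N" using deg[OF x] x by simp
  have "w \<in> {z\<in>{0..<N}. E u z}" using edges[OF \<open>E u w\<close>] \<open>E u w\<close> by simp
  then have "card {z\<in>{0..<N}. E u z} > 0" by (auto simp: card_gt_0_iff)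
  then show "0 < k" using deg edges[OF \<open>E u w\<close>] by simp
qed

lemma srg_smallest_eigenvalue:
  fixes m :: real
  assumes srg: "strongly_regular {0..<N} E n k e d"
    and min_ev: "smallest_eigenvalue N E = - m" and "m > 0"
  shows "real k - real d = m * (real e - real d + m)"
proof -
  let ?A = "adj_matrix N E"
  note rel = srg_adj_matrix[OF srg] and bounds = strongly_regular_bounds[OF srg]
  have "(real e - real d)^2 + 4 * (real k - real d) \<ge> 0" using bounds by simp
  then obtain as where cp: "char_poly ?A = (\<Prod>a\<leftarrow>as. [:-a, 1:])" and len: "length as = N"
    and vals: "\<forall>a\<in>set as. a = real k \<or> a^2 - (real e - real d) * a - (real k - real d) = 0"
    using quadratic_relation_spectrum[OF adj_matrix_carrier rel(1) rel(3)] by blast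
  have "set as \<noteq> {}" using len bounds by auto
  moreover have "Min (set as) = - m"
    using min_ev unfolding smallest_eigenvalue_def energy_eq_sum_list_abs(1)[OF cp] .
  ultimately have "- m \<in> set as" using Min_in[of "set as"] by simp
  then have "- m = real k \<or> (- m)^2 - (real e - real d) * (- m) - (real k - real d) = 0"
    using vals by blast
  moreover have "- m \<noteq> real k" using \<open>m > 0\<close> by simp
  ultimately have "(- m)^2 - (real e - real d) * (- m) - (real k - real d) = 0" by blast
  then show ?thesis by (simp add: algebra_simps power2_eq_square)
qed

lemma srg_energy:
  fixes m r :: real
  assumes srg: "strongly_regular {0..<N} E n k e d"
    and kd: "real k - real d = m * r" and ed: "real e - real d = r - m"
    and "r \<ge> 0" and "m > 0"
  shows "energy N E = 2 * m * N * k * (1 + r) / ((m + k) * (m + r))"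
proof -
  note rel = srg_adj_matrix[OF srg]
  have irrefl: "\<not> E x x" for x
    using srg unfolding strongly_regular_def simple_graph_on_def by auto
  have "energy N E = - 2 * (- m) * N * k * (1 + r) / ((- m - k) * (- m - r))"
  proof (rule energy_of_adjacency_relation[OF irrefl _ rel(3)])
    have d: "real d = real k - m * r" and e: "real e = real k - m * r + r - m"
      using kd ed by simp_all
    show "(adj_matrix N E * adj_matrix N E) $$ (i,j) = (if i = j then - (r * - m) else 0)
        + (r + - m) * adj_matrix N E $$ (i,j) + (real k + r * - m)" if "i < N" "j < N" for i j
      using rel(1)[OF that] unfolding e d by (simp add: algebra_simps)
  qed (use \<open>r \<ge> 0\<close> \<open>m > 0\<close> in simp_all)
  then show ?thesis by (simp add: algebra_simps)
qed

lemma srg_complement_energy: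
  fixes m r :: real
  assumes srg: "strongly_regular {0..<N} E n k e d"
    and kd: "real k - real d = m * r" and ed: "real e - real d = r - m"
    and "r \<ge> 0" and "m \<ge> 1"
  shows "energy N (complement_graph {0..<N} E)
    = 2 * m * N * (N - k - 1) * (1 + r) / ((N - k + r) * (m + r))"
proof -
  let ?A = "adj_matrix N E" and ?B = "adj_matrix N (complement_graph {0..<N} E)"
  note rel = srg_adj_matrix[OF srg]
  have irrefl: "\<not> E x x" for x
    using srg unfolding strongly_regular_def simple_graph_on_def by auto
  have B_eq: "\<And>i j. i < N \<Longrightarrow> j < N \<Longrightarrow> ?B $$ (i,j) = (if i = j then 0 else 1) - ?A $$ (i,j)"
    using complement_adj_matrix_index irrefl by blast
  have cols: "(\<Sum>i<N. ?B $$ (i,j)) = real N - real k - 1" if j: "j < N" for j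
  proof -
    have "(\<Sum>i<N. ?B $$ (i,j)) = (\<Sum>i<N. (if j = i then 0 else 1) * 1 - ?A $$ (i,j))"
      by (rule sum.cong) (auto simp: B_eq j)
    then show ?thesis
      using sum_off_diagonal[OF j, of "\<lambda>_. 1"] rel(3)[OF j] by (simp add: sum_subtractf)
  qed
  have "energy N (complement_graph {0..<N} E) = - 2 * (- 1 - r) * N * (real N - real k - 1)
      * (1 + (m - 1)) / ((- 1 - r - (real N - real k - 1)) * (- 1 - r - (m - 1)))"
  proof (rule energy_of_adjacency_relation[OF _ _ cols])
    show "\<not> complement_graph {0..<N} E x x" for x
      unfolding complement_graph_def by simp
    have d: "real d = real k - m * r" and e: "real e = real k - m * r + r - m"
      using kd ed by simp_all
    show "(?B * ?B) $$ (i,j) = (if i = j then - ((m - 1) * (- 1 - r)) else 0)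
        + ((m - 1) + (- 1 - r)) * ?B $$ (i,j) + ((real N - real k - 1) + (m - 1) * (- 1 - r))"
      if "i < N" "j < N" for i j
      using complement_quadratic_relation[OF adj_matrix_carrier adj_matrix_carrier B_eq
          rel(1) rel(2) rel(3) rel(4) that]
      unfolding e d by (simp add: algebra_simps)
  qed (use \<open>r \<ge> 0\<close> \<open>m \<ge> 1\<close> strongly_regular_bounds(2)[OF srg] in simp_all)
  then show ?thesis by (simp add: algebra_simps)
qed

lemma energy_formulas_eq_iff:
  fixes N m k r :: real
  assumes "N > 0" and "m > 0" and "r \<ge> 0" and "k \<ge> 0" and "N - k - 1 \<ge> 0"
  shows "2 * m * N * k * (1 + r) / ((m + k) * (m + r))
      = 2 * m * N * (N - k - 1) * (1 + r) / ((N - k + r) * (m + r))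
    \<longleftrightarrow> k * (1 + r) = (N - k - 1) * m"
proof -
  define K where "K = N - k - 1"
  define c where "c = 2 * m * N * (1 + r) / (m + r)"
  have den: "N - k + r = 1 + r + K" unfolding K_def by simp
  have L: "2 * m * N * k * (1 + r) / ((m + k) * (m + r)) = c * (k / (m + k))"
    and R: "2 * m * N * K * (1 + r) / ((1 + r + K) * (m + r)) = c * (K / (1 + r + K))"
    unfolding c_def by (simp_all add: mult_ac)
  have "c \<noteq> 0" unfolding c_def using assms by simp
  then have cancel: "c * (k / (m + k)) = c * (K / (1 + r + K)) \<longleftrightarrow> k / (m + k) = K / (1 + r + K)"
    by (rule mult_left_cancel)
  have "m + k > 0" and "1 + r + K > 0" using assms unfolding K_def by auto
  then have frac: "k / (m + k) = K / (1 + r + K) \<longleftrightarrow> k * (1 + r + K) = K * (m + k)"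
    by (simp add: field_simps)
  also have "\<dots> \<longleftrightarrow> k * (1 + r) = K * m"
    by (simp add: algebra_simps)
  finally show ?thesis
    unfolding K_def[symmetric] den L R cancel .
qed

text \<open>Here r = e - d + m is the second eigenvalue besides k and -m, and the second
  property is the counting identity k (k - e - 1) = (N - k - 1) d expressed in m and r.\<close>

lemma srg_energy_eq_complement_iff:
  assumes srg: "strongly_regular {0..<N} E n k e d"
    and min_ev: "smallest_eigenvalue N E = - real m" and "m \<ge> 1"
  obtains r :: real where "r \<ge> 0"
    and "real k * (real m - 1) * (1 + r) = (real k - real m * r) * (real N - real k - 1)"
    and "energy N E = energy N (complement_graph {0..<N} E)
      \<longleftrightarrow> real k * (1 + r) = (real N - real k - 1) * real m"
proof -
  define r where "r = real e - real d + real m"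
  note bounds = strongly_regular_bounds[OF srg]
  have m_pos: "real m > 0" and m_ge: "real m \<ge> 1" using \<open>m \<ge> 1\<close> by simp_all
  have kd: "real k - real d = real m * r"
    using srg_smallest_eigenvalue[OF srg min_ev] \<open>m \<ge> 1\<close> unfolding r_def by simp
  have ed: "real e - real d = r - real m" unfolding r_def by simp
  have "real m * r \<ge> 0" using kd bounds by simp
  then have "r \<ge> 0" using \<open>m \<ge> 1\<close> by (simp add: zero_le_mult_iff)
  have d: "real d = real k - real m * r" and e: "real e = real k - real m * r + r - real m"
    using kd ed by simp_all
  have "real k * (real m - 1) * (1 + r) = (real k - real m * r) * (real N - real k - 1)"
    using srg_parameter_identity[OF srg] unfolding d e by (simp add: algebra_simps)
  moreover have "energy N E = energy N (complement_graph {0..<N} E)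
      \<longleftrightarrow> real k * (1 + r) = (real N - real k - 1) * real m"
    unfolding srg_energy[OF srg kd ed \<open>r \<ge> 0\<close> m_pos] srg_complement_energy[OF srg kd ed \<open>r \<ge> 0\<close> m_ge]
    using \<open>r \<ge> 0\<close> m_pos bounds by (intro energy_formulas_eq_iff) auto
  ultimately show thesis using that \<open>r \<ge> 0\<close> by blast
qed

section \<open>The three families\<close>

lemma graph_iso_card: "graph_iso V E W F \<Longrightarrow> card V = card W"
  unfolding graph_iso_def by (auto intro: bij_betw_same_card)

lemma graph_iso_regular:
  assumes iso: "graph_iso V E W F" and reg: "\<And>x. x \<in> V \<Longrightarrow> card {z\<in>V. E x z} = k"
    and w: "w \<in> W"
  shows "card {z\<in>W. F w z} = k"
proof -
  obtain f where bij: "bij_betw f V W" and hom: "\<forall>x\<in>V. \<forall>y\<in>V. E x y \<longleftrightarrow> F (f x) (f y)"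
    using iso unfolding graph_iso_def by blast
  obtain x where x: "x \<in> V" and wx: "w = f x"
    using w bij unfolding bij_betw_def by auto
  have "f ` {z\<in>V. E x z} = {z\<in>W. F w z}"
    using bij hom x wx unfolding bij_betw_def by auto
  moreover have "inj_on f {z\<in>V. E x z}"
    using bij unfolding bij_betw_def by (auto intro: inj_on_subset)
  ultimately show ?thesis
    using card_image reg[OF x] by metis
qed

lemma card_multipartite_V: "card (multipartite_V a m) = a * m"
  unfolding multipartite_V_def by simp

lemma multipartite_degree:
  assumes "w \<in> multipartite_V a m"
  shows "card {z\<in>multipartite_V a m. multipartite_E a m w z} = (a - 1) * m"
proof -
  have "{z\<in>multipartite_V a m. multipartite_E a m w z} = ({0..<a} - {fst w}) \<times> {0..<m}"
    using assms unfolding multipartite_E_def multipartite_V_def by auto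
  then show ?thesis
    using assms unfolding multipartite_V_def by (auto simp: card_cartesian_product)
qed

lemma orthogonal_array_unique_column:
  assumes oa: "orthogonal_array n m A" and ij: "i < m" "j < m" "i \<noteq> j"
    and c: "c < n^2" and c': "c' < n^2" and agree: "A i c = A i c'" "A j c = A j c'"
  shows "c = c'"
proof -
  have "A i c < n" and "A j c < n"
    using oa ij c unfolding orthogonal_array_def by blast+
  then have "card {x. x < n^2 \<and> A i x = A i c \<and> A j x = A j c} = 1"
    using oa ij unfolding orthogonal_array_def by blast
  then obtain w where w: "{x. x < n^2 \<and> A i x = A i c \<and> A j x = A j c} = {w}"
    using card_1_singletonE by blast
  have "c \<in> {w}" and "c' \<in> {w}"
    unfolding w[symmetric] using c c' agree by simp_all
  then show ?thesis by simp
qed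

lemma orthogonal_array_symbol_count:
  assumes oa: "orthogonal_array n m A" and "m \<ge> 2" and i: "i < m" and s: "s < n"
  shows "card {c. c < n^2 \<and> A i c = s} = n"
proof -
  define j where "j = (if i = 0 then 1 else 0 :: nat)"
  have j: "j < m" "i \<noteq> j" using \<open>m \<ge> 2\<close> unfolding j_def by auto
  have symbols: "A j c < n" if "c < n^2" for c
    using oa j that unfolding orthogonal_array_def by blast
  have pairs: "card {c. c < n^2 \<and> A i c = s \<and> A j c = t} = 1" if "t < n" for t
    using oa i j s that unfolding orthogonal_array_def by blast
  have "{c. c < n^2 \<and> A i c = s} = (\<Union>t<n. {c. c < n^2 \<and> A i c = s \<and> A j c = t})"
    using symbols by auto
  also have "card \<dots> = (\<Sum>t<n. card {c. c < n^2 \<and> A i c = s \<and> A j c = t})"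
    by (rule card_UN_disjoint) auto
  also have "\<dots> = (\<Sum>t<n. 1)"
    using pairs by (intro sum.cong) auto
  finally show ?thesis by simp
qed

text \<open>The neighbours of a column c are partitioned according to the unique row
  in which they agree with c; each row contributes n - 1 of them.\<close>

lemma latin_square_graph_degree:
  assumes oa: "orthogonal_array n m A" and "m \<ge> 2" and c: "c \<in> LS_V n"
  shows "card {z\<in>LS_V n. LS_E n m A c z} = m * (n - 1)"
proof -
  have c_lt: "c < n^2" using c unfolding LS_V_def by simp
  define S where "S i = {z. z < n^2 \<and> A i z = A i c} - {c}" for i
  have agree_unique: "{i'. i' < m \<and> A i' c = A i' z} = {i}" if i: "i < m" and z: "z \<in> S i" for i z
  proof -
    have z_lt: "z < n^2" and agree: "A i c = A i z" and "z \<noteq> c" using z unfolding S_def by auto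
    have "i' = i" if i': "i' < m" and agree': "A i' c = A i' z" for i'
    proof (rule ccontr)
      assume "i' \<noteq> i"
      then have "c = z"
        using orthogonal_array_unique_column[OF oa i i' _ c_lt z_lt agree agree'] by simp
      with \<open>z \<noteq> c\<close> show False by simp
    qed
    then show ?thesis using i agree by blast
  qed
  have "{z\<in>LS_V n. LS_E n m A c z} = (\<Union>i<m. S i)"
  proof
    show "{z\<in>LS_V n. LS_E n m A c z} \<subseteq> (\<Union>i<m. S i)"
    proof
      fix z assume "z \<in> {z\<in>LS_V n. LS_E n m A c z}"
      then have z: "z < n^2" "z \<noteq> c" and card1: "card {i. i < m \<and> A i c = A i z} = 1"
        unfolding LS_E_def LS_V_def by auto
      obtain i where "{i'. i' < m \<and> A i' c = A i' z} = {i}"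
        using card_1_singletonE[OF card1] by blast
      then have "i \<in> {i'. i' < m \<and> A i' c = A i' z}" by simp
      then have "i < m" and "z \<in> S i" using z unfolding S_def by simp_all
      then show "z \<in> (\<Union>i<m. S i)" by blast
    qed
    show "(\<Union>i<m. S i) \<subseteq> {z\<in>LS_V n. LS_E n m A c z}"
    proof
      fix z assume "z \<in> (\<Union>i<m. S i)"
      then obtain i where "i < m" and z: "z \<in> S i" by blast
      then have "card {i'. i' < m \<and> A i' c = A i' z} = 1"
        using agree_unique by simp
      then show "z \<in> {z\<in>LS_V n. LS_E n m A c z}"
        using z c_lt unfolding S_def LS_E_def LS_V_def by auto
    qed
  qed
  moreover have "card (\<Union>i<m. S i) = (\<Sum>i<m. card (S i))"
  proof (rule card_UN_disjoint)
    show "\<forall>i\<in>{..<m}. \<forall>j\<in>{..<m}. i \<noteq> j \<longrightarrow> S i \<inter> S j = {}"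
    proof (intro ballI impI)
      fix i j assume "i \<in> {..<m}" "j \<in> {..<m}" "i \<noteq> j"
      show "S i \<inter> S j = {}"
      proof (rule ccontr)
        assume "S i \<inter> S j \<noteq> {}"
        then obtain z where "z \<in> S i" "z \<in> S j" by blast
        then have "{i} = {j}"
          using agree_unique[of i z] agree_unique[of j z] \<open>i \<in> {..<m}\<close> \<open>j \<in> {..<m}\<close> by simp
        with \<open>i \<noteq> j\<close> show False by simp
      qed
    qed
  qed (simp_all add: S_def)
  moreover have "card (S i) = n - 1" if i: "i < m" for i
  proof -
    have "A i c < n" using oa i c_lt unfolding orthogonal_array_def by blast
    then show ?thesis
      using orthogonal_array_symbol_count[OF oa \<open>m \<ge> 2\<close> i] c_lt
      unfolding S_def by (subst card_Diff_singleton) auto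
  qed
  ultimately show ?thesis by simp
qed

lemma steiner_2_block_bounds:
  assumes "steiner_2 m v B" and "b \<in> B"
  shows "b \<subseteq> {0..<v}" and "card b = m"
  using assms unfolding steiner_2_def by blast+

lemma steiner_2_finite_blocks:
  assumes "steiner_2 m v B"
  shows "finite B"
  using steiner_2_block_bounds[OF assms] by (intro finite_subset[of B "Pow {0..<v}"]) auto

lemma steiner_2_pair_block:
  assumes st: "steiner_2 m v B" and "x < v" and "y < v" and "x \<noteq> y"
  obtains b where "{b\<in>B. x \<in> b \<and> y \<in> b} = {b}"
  using assms card_1_singletonE unfolding steiner_2_def by metis

lemma steiner_2_unique_block:
  assumes st: "steiner_2 m v B" and b: "b \<in> B" "x \<in> b" "y \<in> b"
    and b': "b' \<in> B" "x \<in> b'" "y \<in> b'" and "x \<noteq> y"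
  shows "b = b'"
proof -
  have "x < v" and "y < v" using steiner_2_block_bounds(1)[OF st b(1)] b by auto
  then obtain w where w: "{b\<in>B. x \<in> b \<and> y \<in> b} = {w}"
    using steiner_2_pair_block[OF st _ _ \<open>x \<noteq> y\<close>] by blast
  have "b \<in> {w}" and "b' \<in> {w}"
    unfolding w[symmetric] using b b' by simp_all
  then show ?thesis by simp
qed

lemma steiner_2_replication:
  assumes st: "steiner_2 m v B" and p: "p < v"
  shows "card {b\<in>B. p \<in> b} * (m - 1) = v - 1"
proof -
  let ?T = "{b\<in>B. p \<in> b}"
  note bounds = steiner_2_block_bounds[OF st]
  have cover: "{0..<v} - {p} = (\<Union>b\<in>?T. b - {p})"
  proof
    show "{0..<v} - {p} \<subseteq> (\<Union>b\<in>?T. b - {p})"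
    proof
      fix q assume q: "q \<in> {0..<v} - {p}"
      then obtain b where "{b\<in>B. p \<in> b \<and> q \<in> b} = {b}"
        using steiner_2_pair_block[OF st p, of q] by auto
      then have "b \<in> B" "p \<in> b" "q \<in> b" by auto
      then show "q \<in> (\<Union>b\<in>?T. b - {p})" using q by blast
    qed
    show "(\<Union>b\<in>?T. b - {p}) \<subseteq> {0..<v} - {p}" using bounds(1) by blast
  qed
  have disjoint_union: "card (\<Union>b\<in>?T. b - {p}) = (\<Sum>b\<in>?T. card (b - {p}))"
  proof (rule card_UN_disjoint)
    show "finite ?T" using steiner_2_finite_blocks[OF st] by simp
    show "\<forall>b\<in>?T. finite (b - {p})"
      using bounds(1) finite_subset by blast
    show "\<forall>b\<in>?T. \<forall>b'\<in>?T. b \<noteq> b' \<longrightarrow> (b - {p}) \<inter> (b' - {p}) = {}"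
      using steiner_2_unique_block[OF st] by blast
  qed
  have "v - 1 = card (\<Union>b\<in>?T. b - {p})"
    using p unfolding cover[symmetric] by simp
  also have "\<dots> = (\<Sum>b\<in>?T. m - 1)"
    unfolding disjoint_union using bounds(2) by (intro sum.cong) auto
  finally show ?thesis by simp
qed

lemma steiner_2_card_blocks:
  assumes st: "steiner_2 m v B" and rep: "\<And>p. p < v \<Longrightarrow> card {b\<in>B. p \<in> b} = \<rho>"
  shows "card B * m = v * \<rho>"
proof -
  note bounds = steiner_2_block_bounds[OF st]
  have finB: "finite B" by (rule steiner_2_finite_blocks[OF st])
  have "card B * m = (\<Sum>b\<in>B. card b)" using bounds(2) by simp
  also have "\<dots> = (\<Sum>b\<in>B. \<Sum>p\<in>{0..<v}. if p \<in> b then 1 else 0)"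
  proof (rule sum.cong[OF refl])
    fix b assume "b \<in> B"
    then have "{p\<in>{0..<v}. p \<in> b} = b" using bounds(1) by blast
    then have "card b = (\<Sum>p\<in>{p\<in>{0..<v}. p \<in> b}. 1)" by simp
    also have "\<dots> = (\<Sum>p\<in>{0..<v}. if p \<in> b then 1 else 0)"
      by (rule sum.inter_filter) simp
    finally show "card b = (\<Sum>p\<in>{0..<v}. if p \<in> b then 1 else 0)" .
  qed
  also have "\<dots> = (\<Sum>p\<in>{0..<v}. \<Sum>b\<in>B. if p \<in> b then 1 else 0)"
    by (rule sum.swap)
  also have "\<dots> = (\<Sum>p\<in>{0..<v}. card {b\<in>B. p \<in> b})"
    using finB by (simp add: sum.inter_filter[symmetric])
  also have "\<dots> = v * \<rho>" using rep by simp
  finally show ?thesis .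
qed

text \<open>The blocks meeting b in the point p are disjoint for different p \<in> b,
  since two distinct blocks share at most one point.\<close>

lemma steiner_2_block_graph_degree:
  assumes st: "steiner_2 m v B" and rep: "\<And>p. p < v \<Longrightarrow> card {b\<in>B. p \<in> b} = \<rho>"
    and b: "b \<in> B"
  shows "card {z\<in>B. block_graph_E B b z} = m * (\<rho> - 1)"
proof -
  note bounds = steiner_2_block_bounds[OF st]
  have "{z\<in>B. block_graph_E B b z} = (\<Union>p\<in>b. {b'\<in>B. p \<in> b'} - {b})"
    using b unfolding block_graph_E_def by blast
  moreover have "card (\<Union>p\<in>b. {b'\<in>B. p \<in> b'} - {b}) = (\<Sum>p\<in>b. card ({b'\<in>B. p \<in> b'} - {b}))"
  proof (rule card_UN_disjoint)
    show "finite b" using bounds(1)[OF b] finite_subset by blast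
    show "\<forall>p\<in>b. finite ({b'\<in>B. p \<in> b'} - {b})"
      using steiner_2_finite_blocks[OF st] by simp
    show "\<forall>p\<in>b. \<forall>q\<in>b. p \<noteq> q \<longrightarrow> ({b'\<in>B. p \<in> b'} - {b}) \<inter> ({b'\<in>B. q \<in> b'} - {b}) = {}"
      using steiner_2_unique_block[OF st b] by blast
  qed
  moreover have "card ({b'\<in>B. p \<in> b'} - {b}) = \<rho> - 1" if "p \<in> b" for p
    using that b bounds(1)[OF b] rep[of p] by (subst card_Diff_singleton) auto
  ultimately show ?thesis using bounds(2)[OF b] by simp
qed

lemma steiner_2_replication_number:
  assumes st: "steiner_2 m (m * n + m - n) B" and "m \<ge> 2" and p: "p < m * n + m - n"
  shows "card {b\<in>B. p \<in> b} = n + 1"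
proof -
  have "m * n + m - n - 1 = (n + 1) * (m - 1)"
    using \<open>m \<ge> 2\<close> by (simp add: algebra_simps diff_mult_distrib2)
  then have "card {b\<in>B. p \<in> b} * (m - 1) = (n + 1) * (m - 1)"
    using steiner_2_replication[OF st p] by simp
  moreover have "m - 1 \<noteq> 0" using \<open>m \<ge> 2\<close> by simp
  ultimately show ?thesis by (metis mult_right_cancel)
qed

lemma multipartite_energy_balance_iff:
  fixes a m N k r :: real
  assumes "a \<ge> 2" and "m \<ge> 2" and N: "N = a * m" and k: "k = (a - 1) * m"
    and feasible: "k * (m - 1) * (1 + r) = (k - m * r) * (N - k - 1)"
  shows "k * (1 + r) = (N - k - 1) * m \<longleftrightarrow> a = m"
proof -
  have K: "N - k - 1 = m - 1" unfolding N k by (simp add: algebra_simps)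
  have "(m * (m - 1)) * ((a - 1) * (1 + r)) = (m * (m - 1)) * ((a - 1) - r)"
    using feasible unfolding K unfolding k by (simp add: algebra_simps)
  moreover have "m * (m - 1) \<noteq> 0" using \<open>m \<ge> 2\<close> by simp
  ultimately have "(a - 1) * (1 + r) = (a - 1) - r" by simp
  then have "a * r = 0" by (simp add: algebra_simps)
  then have "r = 0" using \<open>a \<ge> 2\<close> by simp
  have "k * (1 + r) = (N - k - 1) * m \<longleftrightarrow> m * (a - 1) = m * (m - 1)"
    unfolding K unfolding \<open>r = 0\<close> k by (simp add: algebra_simps)
  also have "\<dots> \<longleftrightarrow> a = m" using \<open>m \<ge> 2\<close> by simp
  finally show ?thesis .
qed

lemma latin_square_energy_balance:
  fixes n m N k r :: real
  assumes "m \<ge> 2" and "n \<ge> 2" and N: "N = n^2" and k: "k = m * (n - 1)"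
    and feasible: "k * (m - 1) * (1 + r) = (k - m * r) * (N - k - 1)"
  shows "k * (1 + r) = (N - k - 1) * m"
proof -
  have K: "N - k - 1 = (n - 1) * (n + 1 - m)" unfolding N k by (simp add: algebra_simps power2_eq_square)
  have "(m * (n - 1)) * ((m - 1) * (1 + r)) = (m * (n - 1)) * ((n - 1 - r) * (n + 1 - m))"
    using feasible unfolding K unfolding k by (simp add: algebra_simps)
  moreover have "m * (n - 1) \<noteq> 0" using assms by simp
  ultimately have "(m - 1) * (1 + r) = (n - 1 - r) * (n + 1 - m)" by simp
  then have "r * n = n * (n - m)" by (simp add: algebra_simps)
  then have r: "r = n - m" using \<open>n \<ge> 2\<close> by simp
  show ?thesis unfolding K unfolding k r by (simp add: algebra_simps)
qed

text \<open>Balance would force N = (n + 1)^2, contradicting the block count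
  N m = (m n + m - n)(n + 1).\<close>

lemma steiner_energy_balance_fails:
  fixes n m N k r :: real
  assumes "m \<ge> 2" and "n > 0" and N: "N * m = (m * n + m - n) * (n + 1)" and k: "k = m * n"
    and "r \<ge> 0" and feasible: "k * (m - 1) * (1 + r) = (k - m * r) * (N - k - 1)"
  shows "k * (1 + r) \<noteq> (N - k - 1) * m"
proof
  assume balance: "k * (1 + r) = (N - k - 1) * m"
  then have "m * (N - k - 1) = m * (n * (1 + r))" using k by (simp add: algebra_simps)
  then have K: "N - k - 1 = n * (1 + r)" using \<open>m \<ge> 2\<close> by simp
  have "(m * n * (1 + r)) * (m - 1) = (m * n * (1 + r)) * (n - r)"
    using feasible unfolding K unfolding k by (simp add: algebra_simps)
  moreover have "m * n * (1 + r) \<noteq> 0" using assms by simp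
  ultimately have r: "r = n - m + 1" by simp
  have "N = n * (1 + r) + k + 1" using K by simp
  also have "\<dots> = (n + 1)^2" unfolding r k by (simp add: algebra_simps power2_eq_square)
  finally have "N = (n + 1)^2" .
  with N have "(n + 1) * ((n + 1) * m) = (n + 1) * (m * n + m - n)"
    by (simp add: algebra_simps power2_eq_square)
  then have "(n + 1) * m = m * n + m - n" using \<open>n > 0\<close> by simp
  then show False using \<open>n > 0\<close> by (simp add: algebra_simps)
qed

lemma multipartite_energy_eq_complement_iff:
  assumes srg: "strongly_regular {0..<N} E n k e d"
    and min_ev: "smallest_eigenvalue N E = - real m" and "m \<ge> 2"
    and "a \<ge> 2" and iso: "graph_iso {0..<N} E (multipartite_V a m) (multipartite_E a m)"
  shows "energy N E = energy N (complement_graph {0..<N} E) \<longleftrightarrow> a = m"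
proof -
  obtain r where feasible: "real k * (real m - 1) * (1 + r) = (real k - real m * r) * (real N - real k - 1)"
    and balance: "energy N E = energy N (complement_graph {0..<N} E)
      \<longleftrightarrow> real k * (1 + r) = (real N - real k - 1) * real m"
    using srg_energy_eq_complement_iff[OF srg min_ev] \<open>m \<ge> 2\<close> by auto
  have N: "N = a * m" using graph_iso_card[OF iso] card_multipartite_V by simp
  then have "multipartite_V a m \<noteq> {}"
    using strongly_regular_bounds(2)[OF srg] card_multipartite_V[of a m] by auto
  then obtain w where w: "w \<in> multipartite_V a m" by blast
  have "k = (a - 1) * m"
    using graph_iso_regular[OF iso _ w] multipartite_degree[OF w] srg
    unfolding strongly_regular_def by auto
  then have "real k * (1 + r) = (real N - real k - 1) * real m \<longleftrightarrow> real a = real m"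
    using N \<open>a \<ge> 2\<close> \<open>m \<ge> 2\<close>
    by (intro multipartite_energy_balance_iff[OF _ _ _ _ feasible]) (auto simp: of_nat_diff)
  then show ?thesis using balance by simp
qed

lemma latin_square_energy_eq_complement:
  assumes srg: "strongly_regular {0..<N} E n' k e d"
    and min_ev: "smallest_eigenvalue N E = - real m" and "m \<ge> 2"
    and oa: "orthogonal_array n m A" and iso: "graph_iso {0..<N} E (LS_V n) (LS_E n m A)"
  shows "n \<ge> 2" and "energy N E = energy N (complement_graph {0..<N} E)"
proof -
  obtain r where feasible: "real k * (real m - 1) * (1 + r) = (real k - real m * r) * (real N - real k - 1)"
    and balance: "energy N E = energy N (complement_graph {0..<N} E)
      \<longleftrightarrow> real k * (1 + r) = (real N - real k - 1) * real m"
    using srg_energy_eq_complement_iff[OF srg min_ev] \<open>m \<ge> 2\<close> by auto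
  have N: "N = n^2" using graph_iso_card[OF iso] unfolding LS_V_def by simp
  then have "0 < n^2" using strongly_regular_bounds(2)[OF srg] by linarith
  then have "0 \<in> LS_V n" unfolding LS_V_def by simp
  then have k: "k = m * (n - 1)"
    using graph_iso_regular[OF iso] latin_square_graph_degree[OF oa \<open>m \<ge> 2\<close>] srg
    unfolding strongly_regular_def by auto
  then show "n \<ge> 2" using strongly_regular_bounds(3)[OF srg] by (cases "n \<le> 1") auto
  then have "real k * (1 + r) = (real N - real k - 1) * real m"
    using N k \<open>m \<ge> 2\<close>
    by (intro latin_square_energy_balance[OF _ _ _ _ feasible]) (auto simp: of_nat_diff)
  then show "energy N E = energy N (complement_graph {0..<N} E)" using balance by simp
qed

lemma steiner_block_graph_energy_ne_complement:
  assumes srg: "strongly_regular {0..<N} E n' k e d"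
    and min_ev: "smallest_eigenvalue N E = - real m" and "m \<ge> 2"
    and st: "steiner_2 m (m * n + m - n) B" and iso: "graph_iso {0..<N} E B (block_graph_E B)"
  shows "energy N E \<noteq> energy N (complement_graph {0..<N} E)"
proof -
  obtain r where "r \<ge> 0"
    and feasible: "real k * (real m - 1) * (1 + r) = (real k - real m * r) * (real N - real k - 1)"
    and balance: "energy N E = energy N (complement_graph {0..<N} E)
      \<longleftrightarrow> real k * (1 + r) = (real N - real k - 1) * real m"
    using srg_energy_eq_complement_iff[OF srg min_ev] \<open>m \<ge> 2\<close> by auto
  note replication = steiner_2_replication_number[OF st \<open>m \<ge> 2\<close>]
  have N: "N * m = (m * n + m - n) * (n + 1)"
    using graph_iso_card[OF iso] steiner_2_card_blocks[OF st replication] by simp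
  then obtain b where b: "b \<in> B"
    using graph_iso_card[OF iso] strongly_regular_bounds(2)[OF srg] by fastforce
  have k: "k = m * n"
    using graph_iso_regular[OF iso _ b] steiner_2_block_graph_degree[OF st replication b] srg
    unfolding strongly_regular_def by auto
  have "n \<le> m * n + m" using \<open>m \<ge> 2\<close> by (simp add: trans_le_add1)
  then have "real (m * n + m - n) = real m * real n + real m - real n"
    by (simp add: of_nat_diff)
  then have "real N * real m = (real m * real n + real m - real n) * (real n + 1)"
    using N by (metis of_nat_1 of_nat_add of_nat_mult)
  moreover have "n > 0" using k strongly_regular_bounds(3)[OF srg] by simp
  ultimately have "real k * (1 + r) \<noteq> (real N - real k - 1) * real m"
    using k \<open>m \<ge> 2\<close> \<open>r \<ge> 0\<close>
    by (intro steiner_energy_balance_fails[OF _ _ _ _ _ feasible]) auto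
  then show ?thesis using balance by simp
qed

theorem mainTheorem10:
  fixes N m :: nat and E :: "nat \<Rightarrow> nat \<Rightarrow> bool"
  assumes "m \<ge> 2"
    and "is_srg {0..<N} E"
    and "smallest_eigenvalue N E = - real m"
    and "(\<exists>a\<ge>2. graph_iso {0..<N} E (multipartite_V a m) (multipartite_E a m))
       \<or> (\<exists>n A. orthogonal_array n m A \<and> graph_iso {0..<N} E (LS_V n) (LS_E n m A))
       \<or> (\<exists>n B. steiner_2 m (m * n + m - n) B \<and> graph_iso {0..<N} E B (block_graph_E B))"
  shows "energy N E = energy N (complement_graph {0..<N} E) \<longleftrightarrow>
           graph_iso {0..<N} E (multipartite_V m m) (multipartite_E m m)
         \<or> (\<exists>n\<ge>2. \<exists>A. orthogonal_array n m A \<and> graph_iso {0..<N} E (LS_V n) (LS_E n m A))"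
proof -
  obtain n k e d where srg: "strongly_regular {0..<N} E n k e d"
    using assms(2) unfolding is_srg_def by blast
  note multipartite = multipartite_energy_eq_complement_iff[OF srg assms(3,1)]
    and latin_square = latin_square_energy_eq_complement[OF srg assms(3,1)]
    and steiner = steiner_block_graph_energy_ne_complement[OF srg assms(3,1)]
  show ?thesis
  proof
    assume "energy N E = energy N (complement_graph {0..<N} E)"
    with assms(4) show "graph_iso {0..<N} E (multipartite_V m m) (multipartite_E m m)
        \<or> (\<exists>n\<ge>2. \<exists>A. orthogonal_array n m A \<and> graph_iso {0..<N} E (LS_V n) (LS_E n m A))"
      using multipartite latin_square(1) steiner by blast
  next
    assume "graph_iso {0..<N} E (multipartite_V m m) (multipartite_E m m)
        \<or> (\<exists>n\<ge>2. \<exists>A. orthogonal_array n m A \<and> graph_iso {0..<N} E (LS_V n) (LS_E n m A))"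
    then show "energy N E = energy N (complement_graph {0..<N} E)"
      using multipartite[OF assms(1)] latin_square(2) by blast
  qed
qed

end
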